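(* Let $0<q<1$, $I=[0,b)$ with $0<b\le\infty$, $R,S,T:I\to\mathbb{R}$ continuous. For an admissible function $u$ and $t\in\mathbb{R}$ with $1+tJ_u(x)\ne0$ on $I$ define $(\mathcal{B}^+_tu)(x)=u(x)+\dfrac{tE_u(x)}{1+tJ_u(x)}$. Then for $t_1,t_2\in\mathbb{R}$ and admissible $u_0$ such that $\mathcal{B}^+_{t_2}u_0$ is defined and admissible, $\mathcal{B}^+_{t_1}(\mathcal{B}^+_{t_2}u_0)$ is defined, and $1-(1-q)x(R(x)+S(x)\,\mathcal{B}^+_{t_1}\mathcal{B}^+_{t_2}u_0(x))>0$ on $I$, one has $$\mathcal{B}^+_{t_1}\circ\mathcal{B}^+_{t_2}u_0=\mathcal{B}^+_{t_1+t_2}u_0 .$$ In particular, for a fixed $V$, the maps $\mathcal{B}^+_t$ act (where defined) as a one-parameter group on the solutions of the $q$-Riccati equation $V(x)=\partial_qu(x)-T(x)u(x)+R(x)u(qx)+S(x)u(x)u(qx)$, and this action is transitive on solutions $u$ continuous on $I$ with $1-(1-q)x(R(x)+S(x)u(x))>0$ on $I$: each such solution equals $\mathcal{B}^+_tu_0$ for $t=u(0)-u_0(0)$.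
   Context: $\partial_q f(x)=\dfrac{f(x)-f(qx)}{(1-q)x}$ for $x\neq0$; $\int_0^x f(t)\,d_qt=\sum_{n\ge0}(1-q)q^nx\,f(q^nx)$. A function $u:I\to\mathbb{R}$ is admissible if it is continuous on $I$ and for all $y\in I$: $1-(1-q)y(R(y)+u(y)S(y))>0$ and $1-(1-q)y(T(y)-u(qy)S(y))>0$. For admissible $u$: $$E_u(x)=\exp\Big(\frac{1}{1-q}\int_0^x\frac1y\ln\frac{1-(1-q)y[R(y)+u(y)S(y)]}{1-(1-q)y[T(y)-u(qy)S(y)]}d_qy\Big),\qquad J_u(x)=\int_0^x\frac{S(y)E_u(y)}{1-(1-q)y[R(y)+u(y)S(y)]}d_qy.$$ *)

theory Defs
  imports "HOL-Analysis.Analysis" "HOL-Library.Extended_Real"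
begin

definition Ivl :: "ereal \<Rightarrow> real set" where
  "Ivl b = {x. 0 \<le> x \<and> ereal x < b}"

definition qderiv :: "real \<Rightarrow> (real \<Rightarrow> real) \<Rightarrow> real \<Rightarrow> real" where
  "qderiv q f x = (f x - f (q * x)) / ((1 - q) * x)"

definition qint :: "real \<Rightarrow> (real \<Rightarrow> real) \<Rightarrow> real \<Rightarrow> real" where
  "qint q f x = (\<Sum>n. (1 - q) * q ^ n * x * f (q ^ n * x))"

definition admissible ::
  "real \<Rightarrow> ereal \<Rightarrow> (real \<Rightarrow> real) \<Rightarrow> (real \<Rightarrow> real) \<Rightarrow> (real \<Rightarrow> real) \<Rightarrow> (real \<Rightarrow> real) \<Rightarrow> bool" where
  "admissible q b R S T u \<longleftrightarrow> continuous_on (Ivl b) u \<and>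
     (\<forall>y\<in>Ivl b. 1 - (1 - q) * y * (R y + u y * S y) > 0 \<and>
                 1 - (1 - q) * y * (T y - u (q * y) * S y) > 0)"

definition Efun ::
  "real \<Rightarrow> (real \<Rightarrow> real) \<Rightarrow> (real \<Rightarrow> real) \<Rightarrow> (real \<Rightarrow> real) \<Rightarrow> (real \<Rightarrow> real) \<Rightarrow> real \<Rightarrow> real" where
  "Efun q R S T u x = exp (1 / (1 - q) *
     qint q (\<lambda>y. (1 / y) * ln ((1 - (1 - q) * y * (R y + u y * S y)) /
                              (1 - (1 - q) * y * (T y - u (q * y) * S y)))) x)"

definition Jfun ::
  "real \<Rightarrow> (real \<Rightarrow> real) \<Rightarrow> (real \<Rightarrow> real) \<Rightarrow> (real \<Rightarrow> real) \<Rightarrow> (real \<Rightarrow> real) \<Rightarrow> real \<Rightarrow> real" where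
  "Jfun q R S T u x = qint q (\<lambda>y. S y * Efun q R S T u y /
                              (1 - (1 - q) * y * (R y + u y * S y))) x"

definition Bdefined ::
  "real \<Rightarrow> ereal \<Rightarrow> (real \<Rightarrow> real) \<Rightarrow> (real \<Rightarrow> real) \<Rightarrow> (real \<Rightarrow> real) \<Rightarrow> real \<Rightarrow> (real \<Rightarrow> real) \<Rightarrow> bool" where
  "Bdefined q b R S T t u \<longleftrightarrow> (\<forall>x\<in>Ivl b. 1 + t * Jfun q R S T u x \<noteq> 0)"

definition Bplus ::
  "real \<Rightarrow> (real \<Rightarrow> real) \<Rightarrow> (real \<Rightarrow> real) \<Rightarrow> (real \<Rightarrow> real) \<Rightarrow> real \<Rightarrow> (real \<Rightarrow> real) \<Rightarrow> real \<Rightarrow> real" where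
  "Bplus q R S T t u x = u x + t * Efun q R S T u x / (1 + t * Jfun q R S T u x)"

text \<open>u solves the q-Riccati equation with inhomogeneity V on I (at x \<noteq> 0,
  where the q-derivative is defined).\<close>
definition riccati_sol ::
  "real \<Rightarrow> ereal \<Rightarrow> (real \<Rightarrow> real) \<Rightarrow> (real \<Rightarrow> real) \<Rightarrow> (real \<Rightarrow> real) \<Rightarrow> (real \<Rightarrow> real) \<Rightarrow> (real \<Rightarrow> real) \<Rightarrow> bool" where
  "riccati_sol q b R S T V u \<longleftrightarrow> (\<forall>x\<in>Ivl b. x \<noteq> 0 \<longrightarrow>
     V x = qderiv q u x - T x * u x + R x * u (q * x) + S x * u x * u (q * x))"

end

theory Submission imports Defs begin

(* E_u and J_u are Jackson integrals from 0, so along the orbit x, qx, q^2 x, ... they are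
   governed by first-order q-difference equations
     E_u(x) = E_u(qx) A_u(x) / C_u(x),    J_u(x) - J_u(qx) = (1-q) x S(x) E_u(x) / A_u(x),
   where A_u and C_u are the numerator and denominator of the logarithm defining E_u; and by
   continuity every quantity that is invariant under x -> qx equals its limit at 0.
   For v = B_t u and D = 1 + t J_u one finds A_v = A_u D(qx)/D(x) and C_v = C_u D(x)/D(qx), so
   E_v D^2 / E_u and J_v - J_u / D are q-invariant with limits 1 and 0; hence E_v = E_u / D^2,
   J_v = J_u / D, and the group law is algebra.
   If u is a second solution of the Riccati equation, w = u - u0 satisfies the linear relation
   w(x) C_u0(x) = w(qx) A_u(x), which makes E_u0 / w - J_u0 q-invariant; as w(q^n x) -> u(0) - u0(0) = t
   and E_u0 -> 1, J_u0 -> 0, this invariant is 1/t, i.e. w = t E_u0 / (1 + t J_u0). *)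

lemma q_orbit_const:
  fixes q x :: "'a::monoid_mult" and \<phi> :: "'a \<Rightarrow> 'b"
  assumes "\<And>n. \<phi> (q * (q ^ n * x)) = \<phi> (q ^ n * x)"
  shows "\<phi> (q ^ n * x) = \<phi> x"
proof (induction n)
  case (Suc n)
  then show ?case using assms[of n] by (simp add: mult.assoc)
qed simp

lemma q_orbit_limit:
  fixes q x :: "'a::monoid_mult" and \<phi> :: "'a \<Rightarrow> 'b::t2_space"
  assumes "\<And>n. \<phi> (q * (q ^ n * x)) = \<phi> (q ^ n * x)" and "(\<lambda>n. \<phi> (q ^ n * x)) \<longlonglongrightarrow> L"
  shows "\<phi> x = L"
  using assms(2) by (simp add: q_orbit_const[OF assms(1)] LIMSEQ_const_iff)

lemma qint_unfold:
  assumes "summable (\<lambda>n. (1 - q) * q ^ n * x * f (q ^ n * x))"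
  shows "qint q f x = (1 - q) * x * f x + qint q f (q * x)"
  using suminf_split_head[OF assms] by (simp add: qint_def mult_ac)

lemma qint_orbit_tendsto_0:
  assumes "summable (\<lambda>n. (1 - q) * q ^ n * x * f (q ^ n * x))"
  shows "(\<lambda>n. qint q f (q ^ n * x)) \<longlonglongrightarrow> 0"
proof -
  let ?g = "\<lambda>n. (1 - q) * q ^ n * x * f (q ^ n * x)"
  have tail: "qint q f (q ^ k * x) = suminf ?g - (\<Sum>i<k. ?g i)" for k
  proof -
    have "qint q f (q ^ k * x) = (\<Sum>n. ?g (n + k))"
      unfolding qint_def by (simp add: power_add mult_ac)
    then show ?thesis using suminf_minus_initial_segment[OF assms] by simp
  qed
  have "(\<lambda>k. suminf ?g - (\<Sum>i<k. ?g i)) \<longlonglongrightarrow> suminf ?g - suminf ?g"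
    by (intro tendsto_intros summable_LIMSEQ assms)
  then show ?thesis by (simp add: tail)
qed

lemma qint_summable_Bseq:
  fixes q x :: real
  assumes "\<bar>q\<bar> < 1" and "Bseq (\<lambda>n. f (q ^ n * x))"
  shows "summable (\<lambda>n. (1 - q) * q ^ n * x * f (q ^ n * x))"
proof -
  obtain K where K: "\<And>n. \<bar>f (q ^ n * x)\<bar> \<le> K" using assms(2) by (auto simp: Bseq_def)
  show ?thesis
  proof (rule summable_comparison_test'[where N = 0])
    show "summable (\<lambda>n. \<bar>(1 - q) * x\<bar> * K * \<bar>q\<bar> ^ n)"
      using assms(1) by (intro summable_mult summable_geometric) auto
    show "norm ((1 - q) * q ^ n * x * f (q ^ n * x)) \<le> \<bar>(1 - q) * x\<bar> * K * \<bar>q\<bar> ^ n" for n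
      using mult_left_mono[OF K[of n], of "\<bar>(1 - q) * x\<bar> * \<bar>q\<bar> ^ n"]
      by (simp add: abs_mult power_abs mult_ac)
  qed
qed

lemma abs_ln_le:
  fixes y :: real
  assumes y: "0 < y"
  shows "\<bar>ln y\<bar> \<le> \<bar>y - 1\<bar> / min 1 y"
proof (cases "1 \<le> y")
  case True
  then show ?thesis using ln_le_minus_one[OF y] ln_ge_zero[of y] by simp
next
  case False
  have "ln (1 / y) \<le> 1 / y - 1" using y by (intro ln_le_minus_one) auto
  then show ?thesis using False y by (simp add: ln_div diff_divide_distrib)
qed

lemma Bseq_ln_one_minus_div:
  fixes y a :: "nat \<Rightarrow> real"
  assumes "y \<longlonglongrightarrow> 0" and "a \<longlonglongrightarrow> a0" and "\<And>n. 0 < y n" and "\<And>n. 0 < 1 - y n * a n"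
  shows "Bseq (\<lambda>n. ln (1 - y n * a n) / y n)"
proof -
  have bound: "norm (ln (1 - y n * a n) / y n) \<le> norm (\<bar>a n\<bar> / min 1 (1 - y n * a n))" for n
  proof -
    have "\<bar>ln (1 - y n * a n)\<bar> \<le> \<bar>(1 - y n * a n) - 1\<bar> / min 1 (1 - y n * a n)"
      by (rule abs_ln_le[OF assms(4)])
    also have "\<dots> = y n * (\<bar>a n\<bar> / min 1 (1 - y n * a n))"
      using assms(3)[of n] by (simp add: abs_mult)
    finally have "\<bar>ln (1 - y n * a n) / y n\<bar> \<le> \<bar>a n\<bar> / min 1 (1 - y n * a n)"
      using assms(3)[of n] by (simp add: pos_divide_le_eq mult.commute)
    then show ?thesis using assms(4)[of n] by simp
  qed
  have "(\<lambda>n. \<bar>a n\<bar> / min 1 (1 - y n * a n)) \<longlonglongrightarrow> \<bar>a0\<bar> / min 1 (1 - 0 * a0)"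
    using assms(1,2) by (intro tendsto_intros) auto
  then have majorant: "Bseq (\<lambda>n. \<bar>a n\<bar> / min 1 (1 - y n * a n))"
    using convergent_imp_Bseq convergentI by blast
  show ?thesis
    by (rule Bseq_eventually_mono[OF always_eventually majorant]) (use bound in blast)
qed

lemma Ivl_0: "0 < b \<Longrightarrow> 0 \<in> Ivl b"
  by (simp add: Ivl_def zero_ereal_def)

lemma Ivl_nonneg: "x \<in> Ivl b \<Longrightarrow> 0 \<le> x"
  by (simp add: Ivl_def)

lemma mult_in_Ivl:
  assumes "x \<in> Ivl b" and "0 \<le> c" and "c \<le> 1"
  shows "c * x \<in> Ivl b"
proof -
  have x: "0 \<le> x" "ereal x < b" using assms(1) by (simp_all add: Ivl_def)
  have "ereal (c * x) \<le> ereal x" using x assms(2,3) by (simp add: mult_left_le_one_le)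
  also have "\<dots> < b" by (fact x)
  finally show ?thesis using x assms(2) by (simp add: Ivl_def)
qed

locale q_riccati =
  fixes q :: real and b :: ereal and R S T :: "real \<Rightarrow> real"
  assumes q_pos: "0 < q" and q_less_1: "q < 1" and b_pos: "0 < b"
    and cont_R: "continuous_on (Ivl b) R"
    and cont_S: "continuous_on (Ivl b) S"
    and cont_T: "continuous_on (Ivl b) T"
begin

abbreviation E :: "(real \<Rightarrow> real) \<Rightarrow> real \<Rightarrow> real" where "E \<equiv> Efun q R S T"
abbreviation J :: "(real \<Rightarrow> real) \<Rightarrow> real \<Rightarrow> real" where "J \<equiv> Jfun q R S T"
abbreviation B :: "real \<Rightarrow> (real \<Rightarrow> real) \<Rightarrow> real \<Rightarrow> real" where "B \<equiv> Bplus q R S T"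

definition A_fac :: "(real \<Rightarrow> real) \<Rightarrow> real \<Rightarrow> real" where
  "A_fac u y = 1 - (1 - q) * y * (R y + u y * S y)"

definition C_fac :: "(real \<Rightarrow> real) \<Rightarrow> real \<Rightarrow> real" where
  "C_fac u y = 1 - (1 - q) * y * (T y - u (q * y) * S y)"

abbreviation "E_integrand u y \<equiv> 1 / y * ln (A_fac u y / C_fac u y)"
abbreviation "J_integrand u y \<equiv> S y * E u y / A_fac u y"

lemma E_eq_exp_qint: "E u x = exp (1 / (1 - q) * qint q (E_integrand u) x)"
  unfolding Efun_def A_fac_def C_fac_def ..

lemma J_eq_qint: "J u x = qint q (J_integrand u) x"
  unfolding Jfun_def A_fac_def ..

lemma q_mult_in_Ivl: "y \<in> Ivl b \<Longrightarrow> q * y \<in> Ivl b"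
  using q_pos q_less_1 by (intro mult_in_Ivl) auto

lemma q_orbit_in_Ivl: "x \<in> Ivl b \<Longrightarrow> q ^ n * x \<in> Ivl b"
  using q_pos q_less_1 by (intro mult_in_Ivl) (auto simp: power_le_one)

lemma q_orbit_tendsto_0: "(\<lambda>n. q ^ n * x) \<longlonglongrightarrow> 0"
  using q_pos q_less_1 by (intro tendsto_mult_left_zero LIMSEQ_power_zero) auto

lemma tendsto_q_orbit:
  assumes "continuous_on (Ivl b) f" and "x \<in> Ivl b"
  shows "(\<lambda>n. f (q ^ n * x)) \<longlonglongrightarrow> f 0"
  by (rule continuous_on_tendsto_compose[OF assms(1) q_orbit_tendsto_0 Ivl_0[OF b_pos]])
     (use assms(2) q_orbit_in_Ivl in auto)

lemma q_invariant_eq_limit: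
  fixes \<phi> :: "real \<Rightarrow> 'a::t2_space"
  assumes "\<And>y. y \<in> Ivl b \<Longrightarrow> \<phi> (q * y) = \<phi> y" and "x \<in> Ivl b"
    and "(\<lambda>n. \<phi> (q ^ n * x)) \<longlonglongrightarrow> L"
  shows "\<phi> x = L"
  by (rule q_orbit_limit[OF assms(1)[OF q_orbit_in_Ivl[OF assms(2)]] assms(3)])

lemma continuous_on_q_dilate: "continuous_on (Ivl b) f \<Longrightarrow> continuous_on (Ivl b) (\<lambda>y. f (q * y))"
  by (rule continuous_on_compose2[of "Ivl b" f]) (auto intro: continuous_intros q_mult_in_Ivl)

lemma admissible_continuous: "admissible q b R S T u \<Longrightarrow> continuous_on (Ivl b) u"
  by (simp add: admissible_def)

lemma admissible_pos:
  assumes "admissible q b R S T u" and "y \<in> Ivl b"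
  shows A_fac_pos: "0 < A_fac u y" and C_fac_pos: "0 < C_fac u y"
  using assms by (auto simp: admissible_def A_fac_def C_fac_def)

lemma A_fac_at_0 [simp]: "A_fac u 0 = 1"
  by (simp add: A_fac_def)

lemma C_fac_at_0 [simp]: "C_fac u 0 = 1"
  by (simp add: C_fac_def)

lemma continuous_on_A_fac: "continuous_on (Ivl b) u \<Longrightarrow> continuous_on (Ivl b) (A_fac u)"
  unfolding A_fac_def[abs_def] by (intro continuous_intros cont_R cont_S)

lemma continuous_on_C_fac: "continuous_on (Ivl b) u \<Longrightarrow> continuous_on (Ivl b) (C_fac u)"
  unfolding C_fac_def[abs_def] by (intro continuous_intros cont_T cont_S continuous_on_q_dilate)

lemma E_pos: "0 < E u x"
  by (simp add: Efun_def)

lemma E_integrand_summable: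
  assumes adm: "admissible q b R S T u" and x: "x \<in> Ivl b"
  shows "summable (\<lambda>n. (1 - q) * q ^ n * x * E_integrand u (q ^ n * x))"
proof (cases "x = 0")
  case True
  then show ?thesis by simp
next
  case False
  then have x_pos: "0 < x" using Ivl_nonneg[OF x] by simp
  have cont_u: "continuous_on (Ivl b) u" using adm by (rule admissible_continuous)
  define \<delta> where "\<delta> y = (1 - q) * (R y + u y * S y - T y + u (q * y) * S y) / C_fac u y" for y
  have C_nonzero: "C_fac u y \<noteq> 0" if "y \<in> Ivl b" for y
    using C_fac_pos[OF adm that] by linarith
  have "continuous_on (Ivl b) \<delta>"
    unfolding \<delta>_def
    by (intro continuous_intros cont_R cont_S cont_T cont_u continuous_on_q_dilate continuous_on_C_fac
        ballI C_nonzero)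
  then have \<delta>_lim: "(\<lambda>n. \<delta> (q ^ n * x)) \<longlonglongrightarrow> \<delta> 0" using x by (rule tendsto_q_orbit)
  have ratio: "A_fac u y / C_fac u y = 1 - y * \<delta> y" if "y \<in> Ivl b" for y
  proof -
    have frac: "a / c = 1 - y * (n / c)" if "c \<noteq> 0" and "a = c - y * n" for a c n :: real
      using that by (simp add: field_simps)
    show ?thesis
      unfolding \<delta>_def by (rule frac[OF C_nonzero[OF that]]) (simp add: A_fac_def C_fac_def algebra_simps)
  qed
  have "Bseq (\<lambda>n. ln (1 - q ^ n * x * \<delta> (q ^ n * x)) / (q ^ n * x))"
  proof (rule Bseq_ln_one_minus_div[OF q_orbit_tendsto_0 \<delta>_lim])
    show "0 < q ^ n * x" for n using q_pos x_pos by simp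
    show "0 < 1 - q ^ n * x * \<delta> (q ^ n * x)" for n
      using admissible_pos[OF adm q_orbit_in_Ivl[OF x], of n] ratio[OF q_orbit_in_Ivl[OF x], of n]
      by (metis divide_pos_pos)
  qed
  then have bounded: "Bseq (\<lambda>n. E_integrand u (q ^ n * x))"
    using ratio[OF q_orbit_in_Ivl[OF x]] by simp
  show ?thesis
    by (rule qint_summable_Bseq[OF _ bounded]) (use q_pos q_less_1 in auto)
qed

lemma E_unfold:
  assumes adm: "admissible q b R S T u" and y: "y \<in> Ivl b"
  shows "E u y = E u (q * y) * A_fac u y / C_fac u y"
proof (cases "y = 0")
  case True
  then show ?thesis by simp
next
  case False
  have "E u y = exp (1 / (1 - q) * ((1 - q) * y * E_integrand u y))
      * exp (1 / (1 - q) * qint q (E_integrand u) (q * y))"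
    unfolding E_eq_exp_qint qint_unfold[OF E_integrand_summable[OF adm y]] distrib_left exp_add ..
  also have "1 / (1 - q) * ((1 - q) * y * E_integrand u y) = ln (A_fac u y / C_fac u y)"
    using False q_less_1 by simp
  also have "exp (ln (A_fac u y / C_fac u y)) = A_fac u y / C_fac u y"
    using admissible_pos[OF adm y] by simp
  also have "exp (1 / (1 - q) * qint q (E_integrand u) (q * y)) = E u (q * y)"
    by (rule E_eq_exp_qint[symmetric])
  finally show ?thesis by (simp add: field_simps)
qed

lemma E_orbit_tendsto_1:
  assumes "admissible q b R S T u" and "x \<in> Ivl b"
  shows "(\<lambda>n. E u (q ^ n * x)) \<longlonglongrightarrow> 1"
proof -
  have "(\<lambda>n. exp (1 / (1 - q) * qint q (E_integrand u) (q ^ n * x))) \<longlonglongrightarrow> exp (1 / (1 - q) * 0)"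
    by (intro tendsto_exp tendsto_mult tendsto_const qint_orbit_tendsto_0 E_integrand_summable assms)
  then show ?thesis by (simp add: E_eq_exp_qint)
qed

lemma J_integrand_summable:
  assumes adm: "admissible q b R S T u" and x: "x \<in> Ivl b"
  shows "summable (\<lambda>n. (1 - q) * q ^ n * x * J_integrand u (q ^ n * x))"
proof -
  have A_lim: "(\<lambda>n. A_fac u (q ^ n * x)) \<longlonglongrightarrow> 1"
    using tendsto_q_orbit[OF continuous_on_A_fac[OF admissible_continuous[OF adm]] x] by simp
  have "(\<lambda>n. J_integrand u (q ^ n * x)) \<longlonglongrightarrow> S 0 * 1 / 1"
    by (rule tendsto_divide[OF tendsto_mult[OF tendsto_q_orbit[OF cont_S x] E_orbit_tendsto_1[OF adm x]] A_lim])
      simp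
  then have bounded: "Bseq (\<lambda>n. J_integrand u (q ^ n * x))"
    using convergent_imp_Bseq convergentI by blast
  show ?thesis
    by (rule qint_summable_Bseq[OF _ bounded]) (use q_pos q_less_1 in auto)
qed

lemma J_unfold:
  assumes "admissible q b R S T u" and "y \<in> Ivl b"
  shows "J u y = J u (q * y) + (1 - q) * y * S y * E u y / A_fac u y"
proof -
  have "J u y = (1 - q) * y * J_integrand u y + J u (q * y)"
    unfolding J_eq_qint by (rule qint_unfold[OF J_integrand_summable[OF assms]])
  then show ?thesis by (simp add: mult.assoc)
qed

lemma J_orbit_tendsto_0:
  assumes "admissible q b R S T u" and "x \<in> Ivl b"
  shows "(\<lambda>n. J u (q ^ n * x)) \<longlonglongrightarrow> 0"
  unfolding J_eq_qint by (rule qint_orbit_tendsto_0[OF J_integrand_summable[OF assms]])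

lemma J_increment:
  assumes "admissible q b R S T u" and "y \<in> Ivl b"
  shows "(1 - q) * y * S y * E u y = (J u y - J u (q * y)) * A_fac u y"
  using J_unfold[OF assms] A_fac_pos[OF assms] by (simp add: field_simps)

lemma A_fac_Bplus:
  assumes adm: "admissible q b R S T u" and y: "y \<in> Ivl b" and D: "1 + t * J u y \<noteq> 0"
  shows "A_fac (B t u) y = A_fac u y * (1 + t * J u (q * y)) / (1 + t * J u y)"
proof -
  have "A_fac (B t u) y = A_fac u y - t * ((1 - q) * y * S y * E u y) / (1 + t * J u y)"
    using D by (simp add: A_fac_def Bplus_def field_simps)
  also have "\<dots> = A_fac u y - t * ((J u y - J u (q * y)) * A_fac u y) / (1 + t * J u y)"
    by (simp only: J_increment[OF adm y])
  also have "\<dots> = A_fac u y * (1 + t * J u (q * y)) / (1 + t * J u y)"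
    using D by (simp add: field_simps)
  finally show ?thesis .
qed

lemma C_fac_Bplus:
  assumes adm: "admissible q b R S T u" and y: "y \<in> Ivl b"
    and D: "1 + t * J u y \<noteq> 0" and Dq: "1 + t * J u (q * y) \<noteq> 0"
  shows "C_fac (B t u) y = C_fac u y * (1 + t * J u y) / (1 + t * J u (q * y))"
proof -
  have A: "0 < A_fac u y" and C: "0 < C_fac u y"
    using admissible_pos[OF adm y] by auto
  have E_q: "E u (q * y) = E u y * C_fac u y / A_fac u y"
    using E_unfold[OF adm y] A C by (simp add: field_simps)
  have "(1 - q) * y * S y * E u (q * y) = (1 - q) * y * S y * E u y * C_fac u y / A_fac u y"
    by (simp add: E_q)
  also have "\<dots> = (J u y - J u (q * y)) * A_fac u y * C_fac u y / A_fac u y"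
    by (simp only: J_increment[OF adm y])
  also have "\<dots> = (J u y - J u (q * y)) * C_fac u y"
    using A by simp
  finally have increment: "(1 - q) * y * S y * E u (q * y) = (J u y - J u (q * y)) * C_fac u y" .
  have "C_fac (B t u) y = C_fac u y + t * ((1 - q) * y * S y * E u (q * y)) / (1 + t * J u (q * y))"
    using Dq by (simp add: C_fac_def Bplus_def field_simps)
  also have "\<dots> = C_fac u y * (1 + t * J u y) / (1 + t * J u (q * y))"
    using Dq unfolding increment by (simp add: field_simps)
  finally show ?thesis .
qed

lemma E_Bplus:
  assumes adm: "admissible q b R S T u" and adm_B: "admissible q b R S T (B t u)"
    and defined: "Bdefined q b R S T t u" and x: "x \<in> Ivl b"
  shows "E (B t u) x = E u x / (1 + t * J u x)\<^sup>2"
proof -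
  define D where "D y = 1 + t * J u y" for y
  have D: "D y \<noteq> 0" if "y \<in> Ivl b" for y
    using defined that by (simp add: Bdefined_def D_def)
  have "E (B t u) x * (D x)\<^sup>2 / E u x = 1"
  proof (rule q_invariant_eq_limit[OF _ x])
    fix y assume y: "y \<in> Ivl b"
    have A: "0 < A_fac u y" and C: "0 < C_fac u y"
      using admissible_pos[OF adm y] by auto
    have "E (B t u) y = E (B t u) (q * y) * A_fac (B t u) y / C_fac (B t u) y"
      by (rule E_unfold[OF adm_B y])
    also have "\<dots> = E (B t u) (q * y) * A_fac u y * (D (q * y))\<^sup>2 / (C_fac u y * (D y)\<^sup>2)"
      using D[OF y] D[OF q_mult_in_Ivl[OF y]] C
      by (simp add: A_fac_Bplus[OF adm y] C_fac_Bplus[OF adm y] D_def[symmetric] field_simps power2_eq_square)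
    finally have E_B: "E (B t u) y = E (B t u) (q * y) * A_fac u y * (D (q * y))\<^sup>2 / (C_fac u y * (D y)\<^sup>2)" .
    show "E (B t u) (q * y) * (D (q * y))\<^sup>2 / E u (q * y) = E (B t u) y * (D y)\<^sup>2 / E u y"
      unfolding E_B E_unfold[OF adm y] using D[OF y] A C E_pos[of u "q * y"]
      by (simp add: field_simps power2_eq_square)
  next
    have "(\<lambda>n. E (B t u) (q ^ n * x) * (D (q ^ n * x))\<^sup>2 / E u (q ^ n * x)) \<longlonglongrightarrow> 1 * (1 + t * 0)\<^sup>2 / 1"
      unfolding D_def
      by (intro tendsto_divide tendsto_mult tendsto_power tendsto_add tendsto_const
          E_orbit_tendsto_1 J_orbit_tendsto_0 adm adm_B x) simp
    then show "(\<lambda>n. E (B t u) (q ^ n * x) * (D (q ^ n * x))\<^sup>2 / E u (q ^ n * x)) \<longlonglongrightarrow> 1"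
      by simp
  qed
  then show ?thesis
    using D[OF x] E_pos[of u x] by (simp add: D_def field_simps)
qed

lemma J_Bplus:
  assumes adm: "admissible q b R S T u" and adm_B: "admissible q b R S T (B t u)"
    and defined: "Bdefined q b R S T t u" and x: "x \<in> Ivl b"
  shows "J (B t u) x = J u x / (1 + t * J u x)"
proof -
  define D where "D y = 1 + t * J u y" for y
  have D: "D y \<noteq> 0" if "y \<in> Ivl b" for y
    using defined that by (simp add: Bdefined_def D_def)
  have "J (B t u) x - J u x / D x = 0"
  proof (rule q_invariant_eq_limit[OF _ x])
    fix y assume y: "y \<in> Ivl b"
    have A: "0 < A_fac u y"
      using A_fac_pos[OF adm y] .
    have "J (B t u) y - J (B t u) (q * y) = (1 - q) * y * S y * E (B t u) y / A_fac (B t u) y"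
      using J_unfold[OF adm_B y] by simp
    also have "\<dots> = (1 - q) * y * S y * E u y / (A_fac u y * D y * D (q * y))"
      using D[OF y] D[OF q_mult_in_Ivl[OF y]] A
      by (simp add: E_Bplus[OF adm adm_B defined y] A_fac_Bplus[OF adm y] D_def[symmetric]
          field_simps power2_eq_square)
    also have "\<dots> = (J u y - J u (q * y)) * A_fac u y / (A_fac u y * D y * D (q * y))"
      by (simp only: J_increment[OF adm y])
    also have "\<dots> = (J u y - J u (q * y)) / (D y * D (q * y))"
      using A by simp
    also have "\<dots> = J u y / D y - J u (q * y) / D (q * y)"
      using D[OF y] D[OF q_mult_in_Ivl[OF y]] by (simp add: D_def field_simps)
    finally show "J (B t u) (q * y) - J u (q * y) / D (q * y) = J (B t u) y - J u y / D y"
      by simp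
  next
    have "(\<lambda>n. J (B t u) (q ^ n * x) - J u (q ^ n * x) / D (q ^ n * x)) \<longlonglongrightarrow> 0 - 0 / (1 + t * 0)"
      unfolding D_def
      by (intro tendsto_diff tendsto_divide tendsto_add tendsto_mult tendsto_const
          J_orbit_tendsto_0 adm adm_B x) simp
    then show "(\<lambda>n. J (B t u) (q ^ n * x) - J u (q ^ n * x) / D (q ^ n * x)) \<longlonglongrightarrow> 0"
      by simp
  qed
  then show ?thesis by (simp add: D_def)
qed

lemma Bplus_Bplus:
  assumes adm: "admissible q b R S T u" and adm_B: "admissible q b R S T (B t2 u)"
    and defined2: "Bdefined q b R S T t2 u" and defined1: "Bdefined q b R S T t1 (B t2 u)"
    and x: "x \<in> Ivl b"
  shows "1 + (t1 + t2) * J u x \<noteq> 0" and "B t1 (B t2 u) x = B (t1 + t2) u x"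
proof -
  define D where "D = 1 + t2 * J u x"
  define N where "N = 1 + (t1 + t2) * J u x"
  have D: "D \<noteq> 0"
    using defined2 x by (simp add: Bdefined_def D_def)
  have N_eq: "1 + t1 * (J u x / D) = N / D"
    using D by (simp add: D_def N_def field_simps)
  have "1 + t1 * J (B t2 u) x \<noteq> 0"
    using defined1 x by (simp add: Bdefined_def)
  then have N: "N \<noteq> 0"
    unfolding J_Bplus[OF adm adm_B defined2 x] D_def[symmetric] N_eq by simp
  then show "1 + (t1 + t2) * J u x \<noteq> 0"
    by (simp add: N_def)
  have "B t1 (B t2 u) x = u x + t2 * E u x / D + t1 * (E u x / D\<^sup>2) / (N / D)"
    unfolding Bplus_def E_Bplus[OF adm adm_B defined2 x] J_Bplus[OF adm adm_B defined2 x] D_def[symmetric] N_eq ..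
  also have "\<dots> = u x + (t2 * N + t1) * E u x / (D * N)"
    using D N by (simp add: field_simps power2_eq_square)
  also have "t2 * N + t1 = (t1 + t2) * D"
    by (simp add: D_def N_def algebra_simps)
  also have "u x + (t1 + t2) * D * E u x / (D * N) = B (t1 + t2) u x"
    using D by (simp add: Bplus_def N_def)
  finally show "B t1 (B t2 u) x = B (t1 + t2) u x" .
qed

lemma riccati_sol_diff:
  assumes "riccati_sol q b R S T V u0" and "riccati_sol q b R S T V u" and "y \<in> Ivl b"
  shows "(u y - u0 y) * C_fac u0 y = (u (q * y) - u0 (q * y)) * A_fac u y"
proof (cases "y = 0")
  case True
  then show ?thesis by (simp add: A_fac_def C_fac_def)
next
  case False
  define h where "h = (1 - q) * y"
  have h: "h \<noteq> 0" using False q_less_1 by (simp add: h_def)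
  have scaled: "h * V y = v y - v (q * y) - h * T y * v y + h * R y * v (q * y) + h * S y * v y * v (q * y)"
    if "riccati_sol q b R S T V v" for v
  proof -
    have "V y = (v y - v (q * y)) / h - T y * v y + R y * v (q * y) + S y * v y * v (q * y)"
      using that assms(3) False by (simp add: riccati_sol_def qderiv_def h_def)
    then show ?thesis using h by (simp add: field_simps)
  qed
  show ?thesis
    using scaled[OF assms(1)] scaled[OF assms(2)] unfolding A_fac_def C_fac_def h_def[symmetric]
    by algebra
qed

lemma E_div_minus_J_q_invariant:
  assumes adm: "admissible q b R S T u" and y: "y \<in> Ivl b"
    and w: "w y * C_fac u y = w (q * y) * (A_fac u y - (1 - q) * y * S y * w y)"
    and w_y: "w y \<noteq> 0" and w_qy: "w (q * y) \<noteq> 0"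
  shows "E u (q * y) / w (q * y) - J u (q * y) = E u y / w y - J u y"
proof -
  let ?X = "A_fac u y - (1 - q) * y * S y * w y"
  have A: "0 < A_fac u y" and C: "0 < C_fac u y"
    using admissible_pos[OF adm y] by auto
  have X: "?X \<noteq> 0"
    using w w_y w_qy C by auto
  have "E u y / w y - J u y = E u y * ?X / (w y * A_fac u y) - J u (q * y)"
    unfolding J_unfold[OF adm y] using A w_y by (simp add: field_simps)
  also have "\<dots> = E u (q * y) * (?X / (w y * C_fac u y)) - J u (q * y)"
    unfolding E_unfold[OF adm y] using A C w_y by (simp add: field_simps)
  also have "?X / (w y * C_fac u y) = 1 / w (q * y)"
    unfolding w using X by simp
  finally show ?thesis by simp
qed

lemma riccati_sol_eq_Bplus:
  assumes adm0: "admissible q b R S T u0" and sol0: "riccati_sol q b R S T V u0"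
    and cont_u: "continuous_on (Ivl b) u" and sol: "riccati_sol q b R S T V u"
    and pos: "\<And>y. y \<in> Ivl b \<Longrightarrow> 0 < A_fac u y" and x: "x \<in> Ivl b"
  shows "1 + (u 0 - u0 0) * J u0 x \<noteq> 0" and "u x = B (u 0 - u0 0) u0 x"
proof -
  define t where "t = u 0 - u0 0"
  define w where "w y = u y - u0 y" for y
  have rel: "w y * C_fac u0 y = w (q * y) * (A_fac u0 y - (1 - q) * y * S y * w y)"
    if "y \<in> Ivl b" for y
  proof -
    have "A_fac u y = A_fac u0 y - (1 - q) * y * S y * w y"
      by (simp add: A_fac_def w_def algebra_simps)
    then show ?thesis using riccati_sol_diff[OF sol0 sol that] by (simp add: w_def)
  qed
  have zero_iff: "w (q * y) = 0 \<longleftrightarrow> w y = 0" if y: "y \<in> Ivl b" for y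
    using riccati_sol_diff[OF sol0 sol y] C_fac_pos[OF adm0 y] pos[OF y] by (auto simp: w_def)
  have orbit_zero: "w (q ^ n * x) = 0 \<longleftrightarrow> w x = 0" for n
    by (rule q_orbit_const[where \<phi> = "\<lambda>y. w y = 0"]) (rule zero_iff[OF q_orbit_in_Ivl[OF x]])
  have w_lim: "(\<lambda>n. w (q ^ n * x)) \<longlonglongrightarrow> t"
    unfolding w_def t_def
    by (intro tendsto_diff tendsto_q_orbit cont_u admissible_continuous[OF adm0] x)
  have "1 + t * J u0 x \<noteq> 0 \<and> w x = t * E u0 x / (1 + t * J u0 x)"
  proof (cases "w x = 0")
    case True
    then have "t = 0"
      using w_lim orbit_zero by (simp add: LIMSEQ_const_iff)
    with True show ?thesis by simp
  next
    case False
    have w_orbit: "w (q ^ n * x) \<noteq> 0" for n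
      using orbit_zero False by simp
    define K where "K = E u0 x / w x - J u0 x"
    have K_orbit: "E u0 (q ^ n * x) / w (q ^ n * x) - J u0 (q ^ n * x) = K" for n
      unfolding K_def
    proof (rule q_orbit_const[where \<phi> = "\<lambda>y. E u0 y / w y - J u0 y"])
      fix n
      show "E u0 (q * (q ^ n * x)) / w (q * (q ^ n * x)) - J u0 (q * (q ^ n * x))
          = E u0 (q ^ n * x) / w (q ^ n * x) - J u0 (q ^ n * x)"
        using w_orbit[of n] w_orbit[of "Suc n"]
        by (intro E_div_minus_J_q_invariant[OF adm0 q_orbit_in_Ivl[OF x] rel[OF q_orbit_in_Ivl[OF x]]])
          (simp_all add: mult.assoc)
    qed
    have "w (q ^ n * x) * (K + J u0 (q ^ n * x)) = E u0 (q ^ n * x)" for n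
      using K_orbit[of n] w_orbit[of n] by (auto simp: field_simps)
    moreover have "(\<lambda>n. w (q ^ n * x) * (K + J u0 (q ^ n * x))) \<longlonglongrightarrow> t * (K + 0)"
      by (intro tendsto_mult tendsto_add tendsto_const w_lim J_orbit_tendsto_0 adm0 x)
    ultimately have "(\<lambda>n. E u0 (q ^ n * x)) \<longlonglongrightarrow> t * K"
      by simp
    then have tK: "t * K = 1"
      using LIMSEQ_unique E_orbit_tendsto_1[OF adm0 x] by blast
    then have "1 + t * J u0 x = t * (E u0 x / w x)"
      unfolding K_def by (simp add: right_diff_distrib)
    moreover have "t \<noteq> 0"
      using tK by auto
    ultimately show ?thesis
      using False E_pos[of u0 x] by simp
  qed
  then show "1 + (u 0 - u0 0) * J u0 x \<noteq> 0" and "u x = B (u 0 - u0 0) u0 x"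
    unfolding t_def w_def Bplus_def by auto
qed

end

theorem proposition4:
  fixes q :: real and b :: ereal and R S T :: "real \<Rightarrow> real"
  assumes q: "0 < q" "q < 1"
    and b: "0 < b"
    and cont: "continuous_on (Ivl b) R" "continuous_on (Ivl b) S" "continuous_on (Ivl b) T"
  shows
    "(\<forall>(t1::real) (t2::real) (u0::real \<Rightarrow> real).
        admissible q b R S T u0 \<and>
        Bdefined q b R S T t2 u0 \<and>
        admissible q b R S T (Bplus q R S T t2 u0) \<and>
        Bdefined q b R S T t1 (Bplus q R S T t2 u0) \<and>
        (\<forall>x\<in>Ivl b. 1 - (1 - q) * x * (R x + S x *
              Bplus q R S T t1 (Bplus q R S T t2 u0) x) > 0)
      \<longrightarrow> Bdefined q b R S T (t1 + t2) u0 \<and>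
          (\<forall>x\<in>Ivl b. Bplus q R S T t1 (Bplus q R S T t2 u0) x
                       = Bplus q R S T (t1 + t2) u0 x))
   \<and>
    (\<forall>(V::real \<Rightarrow> real) (u0::real \<Rightarrow> real) (u::real \<Rightarrow> real).
        admissible q b R S T u0 \<and> riccati_sol q b R S T V u0 \<and>
        continuous_on (Ivl b) u \<and> riccati_sol q b R S T V u \<and>
        (\<forall>x\<in>Ivl b. 1 - (1 - q) * x * (R x + S x * u x) > 0)
      \<longrightarrow> Bdefined q b R S T (u 0 - u0 0) u0 \<and>
          (\<forall>x\<in>Ivl b. u x = Bplus q R S T (u 0 - u0 0) u0 x))"
proof -
  interpret q_riccati q b R S T
    using q b cont by unfold_locales
  have composition: "Bdefined q b R S T (t1 + t2) u0 \<and>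
      (\<forall>x\<in>Ivl b. Bplus q R S T t1 (Bplus q R S T t2 u0) x = Bplus q R S T (t1 + t2) u0 x)"
    if "admissible q b R S T u0" "admissible q b R S T (Bplus q R S T t2 u0)"
      "Bdefined q b R S T t2 u0" "Bdefined q b R S T t1 (Bplus q R S T t2 u0)"
    for t1 t2 u0
    using Bplus_Bplus[OF that] by (simp add: Bdefined_def)
  have transitivity: "Bdefined q b R S T (u 0 - u0 0) u0 \<and>
      (\<forall>x\<in>Ivl b. u x = Bplus q R S T (u 0 - u0 0) u0 x)"
    if "admissible q b R S T u0" "riccati_sol q b R S T V u0"
      "continuous_on (Ivl b) u" "riccati_sol q b R S T V u"
      and pos: "\<forall>x\<in>Ivl b. 1 - (1 - q) * x * (R x + S x * u x) > 0"
    for V u0 u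
  proof -
    have "0 < A_fac u y" if "y \<in> Ivl b" for y
      using pos that by (simp add: A_fac_def mult.commute)
    then show ?thesis
      using riccati_sol_eq_Bplus[OF that(1-4)] by (simp add: Bdefined_def)
  qed
  show ?thesis
    using composition transitivity by blast
qed

end
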